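(* Let $\mathbf{x}$ be generated by an additive noise model $x_i=f_i(\mathbf{x}_{\mathrm{pa}(i)})+\epsilon_i$ over a DAG $\mathcal{G}$ with mutually independent $\epsilon_i\sim\mathcal{N}(0,\sigma^2)$, $\sigma^2>0$, and $f_i$ twice continuously differentiable, with all expectations below finite. Let $H(\mathbf{x})=-\nabla^2_{\mathbf{x}}\log p(\mathbf{x})$ and let $l$ be a sink (leaf) node of $\mathcal{G}$. Define the sample-wise Schur complement $$\mathrm{Schur}(H(\mathbf{x})) = H_{\setminus l,\setminus l}(\mathbf{x}) - H_{\setminus l,l}(\mathbf{x})\,H_{ll}(\mathbf{x})^{-1}\,H_{l,\setminus l}(\mathbf{x}).$$ Then $\mathbb{E}_{p(\mathbf{x})}[\mathrm{Schur}(H(\mathbf{x}))] = \mathcal{I}_{\mathrm{marginal}}$, where $\mathcal{I}_{\mathrm{marginal}} = \mathbb{E}[-\nabla^2_{\mathbf{x}_{\setminus l}}\log p(\mathbf{x}_{\setminus l})]$ is the expected negative Hessian of the log-density of the marginal distribution of $\mathbf{x}_{\setminus l}$.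
   Context: $\mathrm{pa}(i)$ denotes the parents of node $i$ in $\mathcal{G}$; $p$ is the joint density of $\mathbf{x}$. For a matrix $M$ indexed by $\{1,\dots,d\}$, $M_{\setminus l,\setminus l}$ is the submatrix with row and column $l$ removed, $M_{\setminus l,l}$ the $l$-th column with entry $l$ removed, $M_{l,\setminus l}$ the $l$-th row with entry $l$ removed, $M_{ll}$ the $(l,l)$ entry. $\mathbf{x}_{\setminus l}$ is $\mathbf{x}$ with coordinate $l$ removed. *)

theory Defs
  imports "HOL-Probability.Probability"
begin

definition pd :: "'i \<Rightarrow> (('i \<Rightarrow> real) \<Rightarrow> real) \<Rightarrow> ('i \<Rightarrow> real) \<Rightarrow> real" where
  "pd j g x = deriv (\<lambda>t. g (x(j := t))) (x j)"

definition C2 :: "(('i \<Rightarrow> real) \<Rightarrow> real) \<Rightarrow> bool" where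
  "C2 g \<longleftrightarrow>
     continuous_on UNIV g \<and>
     (\<forall>j x. (\<lambda>t. g (x(j := t))) differentiable (at (x j))) \<and>
     (\<forall>k. continuous_on UNIV (pd k g)) \<and>
     (\<forall>j k x. (\<lambda>t. pd k g (x(j := t))) differentiable (at (x j))) \<and>
     (\<forall>j k. continuous_on UNIV (pd j (pd k g)))"

definition negHessLog :: "(('i \<Rightarrow> real) \<Rightarrow> real) \<Rightarrow> 'i \<Rightarrow> 'i \<Rightarrow> ('i \<Rightarrow> real) \<Rightarrow> real" where
  "negHessLog g j k x = - pd j (pd k (\<lambda>y. ln (g y))) x"

text \<open>Entry (j,k) (j,k distinct from l) of the Schur complement of the (l,l) entry:
  H_jk - H_jl * H_ll^{-1} * H_lk.\<close>
definition schur :: "('i \<Rightarrow> 'i \<Rightarrow> real) \<Rightarrow> 'i \<Rightarrow> 'i \<Rightarrow> 'i \<Rightarrow> real" where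
  "schur H l j k = H j k - H j l * inverse (H l l) * H l k"

end

theory Submission
  imports Defs
begin

(*
  On a set I of nodes closed under taking parents, the law of X restricted to I has the density
  prod_{i in I} phi_sigma(x_i - f_i(x)): remove a sink s of I; then X_s = f_s(X_{I-{s}}) + eps_s
  with eps_s independent of X_{I-{s}}, and the shear (y, e) |-> y(s := f_s y + e) preserves
  Lebesgue measure. Continuity identifies p and q with these products everywhere. As the leaf l
  occurs in no f_i, the Hessians of -log p and -log q differ only by the summand of index l, and
  the Schur complement cancels all of it except eps_l * d_j d_k f_l(x) / sigma^2. This has mean
  zero because eps_l is symmetric and independent of the remaining coordinates of X.
*)

section \<open>Densities under measure-preserving bijections\<close>

interpretation lborel_PiM: product_sigma_finite "\<lambda>_. lborel :: real measure"
  by (simp add: product_sigma_finite_def lborel.sigma_finite_measure_axioms)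

lemma pair_measure_lborel_shear:
  fixes N :: "'b measure" and h :: "'b \<Rightarrow> real"
  assumes h[measurable]: "h \<in> borel_measurable N"
  shows "distr (N \<Otimes>\<^sub>M lborel) (N \<Otimes>\<^sub>M lborel) (\<lambda>(y, e). (y, h y + e)) = N \<Otimes>\<^sub>M lborel"
proof (rule measure_eqI)
  fix A assume "A \<in> sets (distr (N \<Otimes>\<^sub>M lborel) (N \<Otimes>\<^sub>M lborel) (\<lambda>(y, e). (y, h y + e)))"
  then have A[measurable]: "A \<in> sets (N \<Otimes>\<^sub>M lborel)" by simp
  have "emeasure (distr (N \<Otimes>\<^sub>M lborel) (N \<Otimes>\<^sub>M lborel) (\<lambda>(y, e). (y, h y + e))) A
      = (\<integral>\<^sup>+ y. \<integral>\<^sup>+ e. indicator A (y, h y + e) \<partial>lborel \<partial>N)"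
    by (subst emeasure_distr, measurable, subst lborel.emeasure_pair_measure, measurable)
       (auto intro!: nn_integral_cong simp: indicator_def space_pair_measure)
  also have "\<dots> = (\<integral>\<^sup>+ y. \<integral>\<^sup>+ e. indicator A (y, e) \<partial>lborel \<partial>N)"
  proof (rule nn_integral_cong)
    fix y assume "y \<in> space N"
    then have "(\<lambda>e. indicator A (y, e) :: ennreal) \<in> borel_measurable borel" by measurable
    from nn_integral_real_affine[OF this, of 1 "h y"]
    show "(\<integral>\<^sup>+ e. indicator A (y, h y + e) \<partial>lborel) = (\<integral>\<^sup>+ e. indicator A (y, e) \<partial>lborel)"
      by simp
  qed
  also have "\<dots> = emeasure (N \<Otimes>\<^sub>M lborel) A"
    by (rule lborel.emeasure_pair_measure[OF A, symmetric])
  finally show "emeasure (distr (N \<Otimes>\<^sub>M lborel) (N \<Otimes>\<^sub>M lborel) (\<lambda>(y, e). (y, h y + e))) A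
      = emeasure (N \<Otimes>\<^sub>M lborel) A" .
qed simp

lemma distr_PiM_lborel_fun_upd:
  fixes J :: "'i set"
  assumes "finite J" "s \<notin> J"
  shows "distr (PiM J (\<lambda>_. lborel) \<Otimes>\<^sub>M lborel) (PiM (insert s J) (\<lambda>_. lborel)) (\<lambda>(y, t). y(s := t))
       = PiM (insert s J) (\<lambda>_. lborel :: real measure)"
proof -
  interpret J: finite_product_sigma_finite "\<lambda>_. lborel :: real measure" J
    by standard fact
  show ?thesis
  proof (rule lborel_PiM.PiM_eqI)
    fix A :: "'i \<Rightarrow> real set" assume A: "\<And>i. i \<in> insert s J \<Longrightarrow> A i \<in> sets lborel"
    have "(\<lambda>(y, t). y(s := t)) -` Pi\<^sub>E (insert s J) A \<inter> space (PiM J (\<lambda>_. lborel) \<Otimes>\<^sub>M lborel)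
        = Pi\<^sub>E J A \<times> A s"
      using \<open>s \<notin> J\<close>
      by (auto simp: space_PiM space_pair_measure PiE_iff extensional_def split: if_splits)
    then have "emeasure (distr (PiM J (\<lambda>_. lborel) \<Otimes>\<^sub>M lborel) (PiM (insert s J) (\<lambda>_. lborel))
          (\<lambda>(y, t). y(s := t))) (Pi\<^sub>E (insert s J) A)
        = emeasure (PiM J (\<lambda>_. lborel) \<Otimes>\<^sub>M lborel) (Pi\<^sub>E J A \<times> A s)"
      using A by (subst emeasure_distr) (auto intro!: sets_PiM_I_finite \<open>finite J\<close>)
    also have "\<dots> = emeasure (PiM J (\<lambda>_. lborel)) (Pi\<^sub>E J A) * emeasure lborel (A s)"
      using A by (intro lborel.emeasure_pair_measure_Times) (auto intro!: sets_PiM_I_finite \<open>finite J\<close>)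
    also have "\<dots> = (\<Prod>i\<in>insert s J. emeasure lborel (A i))"
      using A assms by (simp add: J.measure_times mult.commute)
    finally show "emeasure (distr (PiM J (\<lambda>_. lborel) \<Otimes>\<^sub>M lborel) (PiM (insert s J) (\<lambda>_. lborel))
          (\<lambda>(y, t). y(s := t))) (Pi\<^sub>E (insert s J) A) = (\<Prod>i\<in>insert s J. emeasure lborel (A i))" .
  qed (use assms in auto)
qed

lemma distributed_bij:
  assumes Z: "distributed M N Z g"
    and [measurable]: "\<Phi> \<in> measurable N K" "\<Psi> \<in> measurable K N"
    and preserving: "distr N K \<Phi> = K"
    and inverse: "\<And>z. z \<in> space N \<Longrightarrow> \<Psi> (\<Phi> z) = z" "\<And>x. x \<in> space K \<Longrightarrow> \<Phi> (\<Psi> x) = x"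
  shows "distributed M K (\<lambda>\<omega>. \<Phi> (Z \<omega>)) (\<lambda>x. g (\<Psi> x))"
proof -
  have [measurable]: "Z \<in> measurable M N" "g \<in> borel_measurable N"
    and Z_distr: "distr M N Z = density N g"
    using Z by (auto simp: distributed_def)
  have "distr K N \<Psi> = distr N N (\<Psi> \<circ> \<Phi>)"
    by (subst preserving[symmetric], rule distr_distr) auto
  also have "\<dots> = distr N N (\<lambda>x. x)"
    by (rule distr_cong) (auto simp: inverse)
  also have "\<dots> = N"
    by (rule distr_id)
  finally have N_eq: "N = distr K N \<Psi>" ..
  have "distr M K (\<lambda>\<omega>. \<Phi> (Z \<omega>)) = distr (distr M N Z) K \<Phi>"
    by (subst distr_distr) (auto simp: comp_def)
  also have "\<dots> = distr (density (distr K N \<Psi>) g) K \<Phi>"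
    by (simp add: Z_distr N_eq[symmetric])
  also have "\<dots> = density K (g \<circ> \<Psi>)"
    by (rule distr_density_distr) (auto simp: inverse)
  finally show ?thesis
    unfolding distributed_def by (auto simp: comp_def)
qed

lemma distributed_fun_upd_shear:
  fixes Y :: "'a \<Rightarrow> 'i \<Rightarrow> real" and E :: "'a \<Rightarrow> real"
  assumes "finite J" "s \<notin> J"
    and h[measurable]: "h \<in> borel_measurable (PiM J (\<lambda>_. lborel))"
    and YE: "distributed M (PiM J (\<lambda>_. lborel) \<Otimes>\<^sub>M lborel) (\<lambda>\<omega>. (Y \<omega>, E \<omega>)) g"
  shows "distributed M (PiM (insert s J) (\<lambda>_. lborel)) (\<lambda>\<omega>. (Y \<omega>)(s := h (Y \<omega>) + E \<omega>))
           (\<lambda>x. g (restrict x J, x s - h (restrict x J)))"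
proof -
  let ?N = "PiM J (\<lambda>_. lborel) \<Otimes>\<^sub>M (lborel :: real measure)"
    and ?K = "PiM (insert s J) (\<lambda>_. lborel :: real measure)"
  define \<Phi> where "\<Phi> = (\<lambda>(y, e). y(s := h y + e))"
  define \<Psi> where "\<Psi> x = (restrict x J, x s - h (restrict x J))" for x :: "'i \<Rightarrow> real"
  have \<Phi>_comp: "\<Phi> = (\<lambda>(y, t). y(s := t)) \<circ> (\<lambda>(y, e). (y, h y + e))"
    by (auto simp: \<Phi>_def)
  have \<Phi>_measurable[measurable]: "\<Phi> \<in> measurable ?N ?K"
    unfolding \<Phi>_comp by measurable
  have \<Psi>_measurable[measurable]: "\<Psi> \<in> measurable ?K ?N"
    unfolding \<Psi>_def by measurable
  have "distr ?N ?K \<Phi> = distr (distr ?N ?N (\<lambda>(y, e). (y, h y + e))) ?K (\<lambda>(y, t). y(s := t))"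
    unfolding \<Phi>_comp by (rule distr_distr[symmetric]) measurable
  also have "\<dots> = ?K"
    unfolding pair_measure_lborel_shear[OF h] using assms(1,2) by (rule distr_PiM_lborel_fun_upd)
  finally have preserving: "distr ?N ?K \<Phi> = ?K" .
  have "\<Psi> (\<Phi> z) = z" if "z \<in> space ?N" for z
  proof -
    obtain y e where z: "z = (y, e)" by fastforce
    have "restrict (y(s := t)) J = y" for t
      using that \<open>s \<notin> J\<close> by (auto simp: z space_pair_measure space_PiM PiE_def extensional_def)
    then show ?thesis by (simp add: z \<Phi>_def \<Psi>_def)
  qed
  moreover have "\<Phi> (\<Psi> x) = x" if "x \<in> space ?K" for x
    using that by (auto simp: \<Phi>_def \<Psi>_def space_PiM PiE_def extensional_def fun_eq_iff)
  ultimately have "distributed M ?K (\<lambda>\<omega>. \<Phi> (Y \<omega>, E \<omega>)) (\<lambda>x. g (\<Psi> x))"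
    using distributed_bij[OF YE \<Phi>_measurable \<Psi>_measurable preserving] by blast
  then show ?thesis
    by (simp add: \<Phi>_def \<Psi>_def)
qed

lemma distributed_cong_on_space:
  assumes "distributed M N Y g"
    and "\<And>\<omega>. \<omega> \<in> space M \<Longrightarrow> Y \<omega> = Y' \<omega>" "\<And>x. x \<in> space N \<Longrightarrow> g x = g' x"
  shows "distributed M N Y' g'"
proof -
  have "Y \<in> measurable M N" and g: "g \<in> borel_measurable N"
    using assms(1) by (auto simp: distributed_def)
  then have "Y' \<in> measurable M N" and g': "g' \<in> borel_measurable N"
    using assms(2,3) by (metis measurable_cong)+
  moreover have "distr M N Y' = distr M N Y"
    using assms(2) by (auto intro: distr_cong)
  moreover have "density N g = density N g'"
    using assms(3) by (intro density_cong[OF g g']) auto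
  ultimately show ?thesis
    using assms(1) by (simp add: distributed_def)
qed

section \<open>Continuous densities\<close>

lemma emeasure_lborel_open_pos:
  fixes U :: "real set"
  assumes "open U" "x \<in> U"
  shows "emeasure lborel U > 0"
proof -
  obtain e where "e > 0" "ball x e \<subseteq> U"
    using assms open_contains_ball by blast
  then have "{x - e<..<x + e} \<subseteq> U"
    by (auto simp: subset_eq dist_real_def abs_less_iff)
  then have "emeasure lborel {x - e<..<x + e} \<le> emeasure lborel U"
    using \<open>open U\<close> by (intro emeasure_mono) (auto simp: borel_open)
  moreover have "0 < emeasure lborel {x - e<..<x + e}"
    using \<open>e > 0\<close> by simp
  ultimately show ?thesis
    by (metis order.strict_trans2)
qed

lemma emeasure_PiM_lborel_PiE_open_nonzero:
  fixes U :: "'i \<Rightarrow> real set"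
  assumes "finite I" "\<And>i. open (U i)" "\<And>i. x i \<in> U i"
  shows "emeasure (PiM I (\<lambda>_. lborel)) (PiE I U) \<noteq> 0"
proof -
  have "emeasure (PiM I (\<lambda>_. lborel)) (PiE I U) = (\<Prod>i\<in>I. emeasure lborel (U i))"
    using assms(1,2) by (intro lborel_PiM.emeasure_PiM) (auto simp: borel_open)
  moreover have "emeasure lborel (U i) \<noteq> 0" for i
    by (metis assms(2,3) emeasure_lborel_open_pos order_less_irrefl)
  ultimately show ?thesis
    using assms(1) by (simp add: prod_zero_iff)
qed

lemma openin_PiE_UNIV_obtain_box:
  fixes x0 :: "'i \<Rightarrow> real"
  assumes "openin (top_of_set (PiE I (\<lambda>_. UNIV))) W" "x0 \<in> W"
  obtains U where "\<And>i. open (U i)" "\<And>i. x0 i \<in> U i" "PiE I U \<subseteq> W"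
proof -
  obtain V where V: "open V" "W = PiE I (\<lambda>_. UNIV) \<inter> V"
    using assms(1) by (auto simp: openin_open)
  with assms(2) obtain U where U: "\<forall>i\<in>UNIV. openin euclidean (U i)" "x0 \<in> Pi\<^sub>E UNIV U" "Pi\<^sub>E UNIV U \<subseteq> V"
    unfolding open_fun_def openin_product_topology_alt by blast
  show thesis
  proof (rule that)
    show "open (U i)" for i
      using U(1) open_openin by blast
    show "x0 i \<in> U i" for i
      using U(2) by auto
    show "PiE I U \<subseteq> W"
    proof
      fix x assume x: "x \<in> PiE I U"
      have "x i \<in> U i" for i
      proof (cases "i \<in> I")
        case True
        with x show ?thesis
          by auto
      next
        case False
        then have "x i = x0 i"
          using x assms(2) V(2) by (auto simp: PiE_def extensional_def)
        with U(2) show ?thesis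
          by auto
      qed
      then show "x \<in> W"
        using x U(3) V(2) by (auto simp: PiE_def)
    qed
  qed
qed

lemma continuous_on_AE_PiM_lborel_eq:
  fixes g1 g2 :: "('i::finite \<Rightarrow> real) \<Rightarrow> real"
  assumes "continuous_on (PiE I (\<lambda>_. UNIV)) g1" "continuous_on (PiE I (\<lambda>_. UNIV)) g2"
    and ae: "AE x in PiM I (\<lambda>_. lborel). g1 x = g2 x"
    and x0: "x0 \<in> PiE I (\<lambda>_. UNIV)"
  shows "g1 x0 = g2 x0"
proof (rule ccontr)
  assume "g1 x0 \<noteq> g2 x0"
  let ?S = "PiE I (\<lambda>_. UNIV :: real set)"
  have "continuous_on ?S (\<lambda>x. g1 x - g2 x)"
    using assms(1,2) by (intro continuous_on_diff)
  then have "openin (top_of_set ?S) (?S \<inter> (\<lambda>x. g1 x - g2 x) -` (- {0}))"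
    by (rule continuous_openin_preimage_gen) auto
  then obtain U where U: "\<And>i. open (U i)" "\<And>i. x0 i \<in> U i"
    and "PiE I U \<subseteq> ?S \<inter> (\<lambda>x. g1 x - g2 x) -` (- {0})"
    by (rule openin_PiE_UNIV_obtain_box) (use x0 \<open>g1 x0 \<noteq> g2 x0\<close> in auto)
  then have "PiE I U \<subseteq> {x \<in> space (PiM I (\<lambda>_. lborel)). g1 x \<noteq> g2 x}"
    by (auto simp: space_PiM)
  moreover obtain N where "{x \<in> space (PiM I (\<lambda>_. lborel)). g1 x \<noteq> g2 x} \<subseteq> N"
    and N: "emeasure (PiM I (\<lambda>_. lborel)) N = 0" "N \<in> sets (PiM I (\<lambda>_. lborel))"
    using ae by (rule AE_E)
  ultimately have "emeasure (PiM I (\<lambda>_. lborel)) (PiE I U) \<le> emeasure (PiM I (\<lambda>_. lborel)) N"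
    by (intro emeasure_mono) auto
  then have "emeasure (PiM I (\<lambda>_. lborel)) (PiE I U) = 0"
    using N(1) by simp
  moreover have "emeasure (PiM I (\<lambda>_. lborel)) (PiE I U) \<noteq> 0"
    using emeasure_PiM_lborel_PiE_open_nonzero[of I U x0, OF finite] U by blast
  ultimately show False
    by blast
qed

lemma borel_measurable_PiM_if_local:
  fixes g :: "('i::finite \<Rightarrow> real) \<Rightarrow> real"
  assumes "continuous_on UNIV g"
    and local: "\<And>x y. (\<forall>j\<in>J. x j = y j) \<Longrightarrow> g x = g y"
  shows "g \<in> borel_measurable (PiM J (\<lambda>_. lborel))"
proof -
  have "sets (PiM UNIV (\<lambda>_. lborel)) = sets (borel :: ('i \<Rightarrow> real) measure)"
    using sets_PiM_equal_borel by (simp add: sets_PiM_cong[OF refl sets_lborel])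
  then have g[measurable]: "g \<in> borel_measurable (PiM UNIV (\<lambda>_. lborel))"
    using borel_measurable_continuous_onI[OF assms(1)] measurable_cong_sets by blast
  define extend where "extend y = (\<lambda>i. if i \<in> J then y i else 0 :: real)" for y :: "'i \<Rightarrow> real"
  have "extend \<in> measurable (PiM J (\<lambda>_. lborel)) (PiM UNIV (\<lambda>_. lborel))"
  proof -
    have "(\<lambda>y. if i \<in> J then y i else 0) \<in> borel_measurable (PiM J (\<lambda>_. lborel))" for i
      by (cases "i \<in> J") auto
    then show ?thesis
      unfolding extend_def by (intro measurable_PiM_single') (auto simp: space_PiM)
  qed
  then have "(\<lambda>y. g (extend y)) \<in> borel_measurable (PiM J (\<lambda>_. lborel))"
    by measurable
  moreover have "g (extend y) = g y" for y
    by (rule local) (auto simp: extend_def)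
  ultimately show ?thesis
    by simp
qed

section \<open>Independence and symmetric noise\<close>

lemma (in prob_space) indep_var_cong:
  assumes "indep_var S X T Y"
    and "\<And>\<omega>. \<omega> \<in> space M \<Longrightarrow> X \<omega> = X' \<omega>" "\<And>\<omega>. \<omega> \<in> space M \<Longrightarrow> Y \<omega> = Y' \<omega>"
  shows "indep_var S X' T Y'"
proof -
  have "distr M S X = distr M S X'" "distr M T Y = distr M T Y'"
    "distr M (S \<Otimes>\<^sub>M T) (\<lambda>\<omega>. (X \<omega>, Y \<omega>)) = distr M (S \<Otimes>\<^sub>M T) (\<lambda>\<omega>. (X' \<omega>, Y' \<omega>))"
    using assms(2,3) by (auto intro!: distr_cong)
  moreover have "random_variable S X" "random_variable T Y"
    using assms(1) by (auto simp: indep_var_distribution_eq)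
  then have "random_variable S X'" "random_variable T Y'"
    using assms(2,3) by (metis measurable_cong)+
  ultimately show ?thesis
    using assms(1) by (simp add: indep_var_distribution_eq)
qed

lemma (in prob_space) indep_var_distr_pair:
  assumes "indep_var S X T Y" and [measurable]: "h \<in> measurable T T'"
  shows "distr M (S \<Otimes>\<^sub>M T') (\<lambda>\<omega>. (X \<omega>, h (Y \<omega>))) = distr M S X \<Otimes>\<^sub>M distr M T' (\<lambda>\<omega>. h (Y \<omega>))"
proof -
  have [measurable]: "X \<in> measurable M S" "Y \<in> measurable M T"
    and indep: "distr M S X \<Otimes>\<^sub>M distr M T Y = distr M (S \<Otimes>\<^sub>M T) (\<lambda>\<omega>. (X \<omega>, Y \<omega>))"
    using assms(1) by (auto simp: indep_var_distribution_eq)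
  have "distr M (S \<Otimes>\<^sub>M T') (\<lambda>\<omega>. (X \<omega>, h (Y \<omega>)))
      = distr (distr M (S \<Otimes>\<^sub>M T) (\<lambda>\<omega>. (X \<omega>, Y \<omega>))) (S \<Otimes>\<^sub>M T') (\<lambda>(x, y). (x, h y))"
    by (subst distr_distr) (auto simp: comp_def)
  also have "\<dots> = distr (distr M S X) S (\<lambda>x. x) \<Otimes>\<^sub>M distr (distr M T Y) T' h"
    unfolding indep[symmetric]
  proof (rule pair_measure_distr[symmetric])
    have "prob_space (distr (distr M T Y) T' h)"
      by (intro prob_space.prob_space_distr prob_space_distr) auto
    then show "sigma_finite_measure (distr (distr M T Y) T' h)"
      by (rule prob_space_imp_sigma_finite)
  qed auto
  also have "\<dots> = distr M S X \<Otimes>\<^sub>M distr M T' (\<lambda>\<omega>. h (Y \<omega>))"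
    by (subst distr_distr) (auto simp: comp_def distr_id2)
  finally show ?thesis .
qed

lemma integral_times_eq_0_if_symmetric:
  fixes E :: "'a \<Rightarrow> real"
  assumes symmetric: "distr M (N \<Otimes>\<^sub>M lborel) (\<lambda>\<omega>. (Y \<omega>, - E \<omega>)) = distr M (N \<Otimes>\<^sub>M lborel) (\<lambda>\<omega>. (Y \<omega>, E \<omega>))"
    and [measurable]: "Y \<in> measurable M N" "E \<in> borel_measurable M" "g \<in> borel_measurable N"
  shows "(\<integral>\<omega>. E \<omega> * g (Y \<omega>) \<partial>M) = 0"
proof -
  define F where "F = (\<lambda>(y, e). e * g y)"
  have [measurable]: "F \<in> borel_measurable (N \<Otimes>\<^sub>M lborel)"
    unfolding F_def by measurable
  have "(\<integral>\<omega>. E \<omega> * g (Y \<omega>) \<partial>M) = (\<integral>z. F z \<partial>distr M (N \<Otimes>\<^sub>M lborel) (\<lambda>\<omega>. (Y \<omega>, E \<omega>)))"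
    by (simp add: integral_distr F_def)
  also have "\<dots> = (\<integral>z. F z \<partial>distr M (N \<Otimes>\<^sub>M lborel) (\<lambda>\<omega>. (Y \<omega>, - E \<omega>)))"
    by (simp add: symmetric)
  also have "\<dots> = - (\<integral>\<omega>. E \<omega> * g (Y \<omega>) \<partial>M)"
    by (simp add: integral_distr F_def)
  finally show ?thesis
    by simp
qed

section \<open>Partial derivatives of Gaussian log-densities\<close>

lemma has_real_derivative_pd:
  assumes "(\<lambda>t. g (x(j := t))) differentiable (at (x j))"
  shows "((\<lambda>t. g (x(j := t))) has_real_derivative pd j g x) (at (x j))"
  using assms unfolding pd_def by (simp add: DERIV_deriv_iff_real_differentiable)

lemma C2_has_real_derivative_pd:
  "C2 g \<Longrightarrow> ((\<lambda>t. g (x(j := t))) has_real_derivative pd j g x) (at (x j))"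
  by (rule has_real_derivative_pd) (simp add: C2_def)

lemma C2_has_real_derivative_pd_pd:
  "C2 g \<Longrightarrow> ((\<lambda>t. pd k g (x(j := t))) has_real_derivative pd j (pd k g) x) (at (x j))"
  by (rule has_real_derivative_pd) (simp add: C2_def)

lemma C2_has_real_derivative_residual:
  assumes "C2 g"
  shows "((\<lambda>t. (x(j := t)) i - g (x(j := t))) has_real_derivative
           (if i = j then 1 else 0) - pd j g x) (at (x j))"
proof -
  have "((\<lambda>t. (x(j := t)) i) has_real_derivative (if i = j then 1 else 0)) (at (x j))"
    by (cases "i = j") (auto intro!: derivative_eq_intros)
  then show ?thesis
    by (rule DERIV_diff[OF _ C2_has_real_derivative_pd[OF assms]])
qed

definition ignores_coord :: "'i \<Rightarrow> (('i \<Rightarrow> real) \<Rightarrow> real) \<Rightarrow> bool" where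
  "ignores_coord l g \<longleftrightarrow> (\<forall>x t. g (x(l := t)) = g x)"

lemma ignores_coord_pd_eq_0:
  assumes "ignores_coord l g"
  shows "pd l g x = 0"
  using assms by (simp add: ignores_coord_def pd_def)

lemma pd_const [simp]: "pd j (\<lambda>_. c) x = 0"
  by (simp add: pd_def)

lemma ignores_coord_pd:
  assumes "ignores_coord l g"
  shows "ignores_coord l (pd k g)"
proof (cases "k = l")
  case True
  then show ?thesis
    using ignores_coord_pd_eq_0[OF assms] by (simp add: ignores_coord_def)
next
  case False
  then have "g (x(l := t, k := s)) = g (x(k := s))" for x t s
    using assms by (metis fun_upd_twist ignores_coord_def)
  with False show ?thesis
    by (simp add: ignores_coord_def pd_def)
qed

lemma ignores_coord_eq:
  assumes "ignores_coord l g" "\<And>i. i \<noteq> l \<Longrightarrow> x i = y i"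
  shows "g x = g y"
proof -
  have "y = x(l := y l)"
    using assms(2) by auto
  then show ?thesis
    using assms(1) unfolding ignores_coord_def by metis
qed

lemma ignores_coord_restrict:
  assumes "ignores_coord l g"
  shows "g (restrict x (UNIV - {l})) = g x"
  by (rule ignores_coord_eq[OF assms]) simp

lemma borel_measurable_PiM_ignores_coord:
  fixes g :: "('i::finite \<Rightarrow> real) \<Rightarrow> real"
  assumes "continuous_on UNIV g" "ignores_coord l g"
  shows "g \<in> borel_measurable (PiM (UNIV - {l}) (\<lambda>_. lborel))"
  using assms by (intro borel_measurable_PiM_if_local) (auto intro: ignores_coord_eq)

definition anm_density :: "real \<Rightarrow> ('i \<Rightarrow> ('i \<Rightarrow> real) \<Rightarrow> real) \<Rightarrow> 'i set \<Rightarrow> ('i \<Rightarrow> real) \<Rightarrow> real" where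
  "anm_density \<sigma> f I x = (\<Prod>i\<in>I. normal_density 0 \<sigma> (x i - f i x))"

lemma anm_density_pos: "\<sigma> > 0 \<Longrightarrow> anm_density \<sigma> f I x > 0"
  by (auto simp: anm_density_def normal_density_pos intro!: prod_pos)

lemma ln_anm_density:
  assumes "finite I" "\<sigma> > 0"
  shows "ln (anm_density \<sigma> f I x) = (\<Sum>i\<in>I. - ln (sqrt (2 * pi * \<sigma>\<^sup>2)) - (x i - f i x)\<^sup>2 / (2 * \<sigma>\<^sup>2))"
  using assms unfolding anm_density_def
  by (subst ln_prod) (auto simp: normal_density_pos normal_density_def ln_mult ln_div intro!: sum.cong)

lemma continuous_on_anm_density:
  assumes "\<And>i. continuous_on UNIV (f i)" "\<sigma> > 0"
  shows "continuous_on A (anm_density \<sigma> f I)"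
  unfolding anm_density_def normal_density_def using assms
  by (intro continuous_intros continuous_on_subset[OF assms(1)] continuous_on_subset[OF continuous_on_product_coordinates]) auto

lemma anm_density_empty [simp]: "anm_density \<sigma> f {} x = 1"
  by (simp add: anm_density_def)

lemma pd_ln_anm_density:
  assumes C2: "\<And>i. C2 (f i)" and "\<sigma> > 0" and "finite I"
    and g: "\<And>z. z \<in> PiE I (\<lambda>_. UNIV) \<Longrightarrow> g z = anm_density \<sigma> f I z"
    and "k \<in> I" "z \<in> PiE I (\<lambda>_. UNIV)"
  shows "pd k (\<lambda>y. ln (g y)) z = - (\<Sum>i\<in>I. (z i - f i z) * ((if i = k then 1 else 0) - pd k (f i) z)) / \<sigma>\<^sup>2"
proof -
  define c where "c = - ln (sqrt (2 * pi * \<sigma>\<^sup>2))"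
  define r where "r i t = (z(k := t)) i - f i (z(k := t))" for i t
  define D where "D i = (if i = k then 1 else 0) - pd k (f i) z" for i
  have "z(k := t) \<in> PiE I (\<lambda>_. UNIV)" for t
    using assms(5,6) by (auto simp: PiE_def extensional_def)
  then have "(\<lambda>t. ln (g (z(k := t)))) = (\<lambda>t. \<Sum>i\<in>I. c - (r i t)\<^sup>2 / (2 * \<sigma>\<^sup>2))"
    using \<open>\<sigma> > 0\<close> \<open>finite I\<close> by (simp add: g ln_anm_density c_def r_def)
  moreover have "((\<lambda>t. \<Sum>i\<in>I. c - (r i t)\<^sup>2 / (2 * \<sigma>\<^sup>2)) has_real_derivative
      (\<Sum>i\<in>I. - ((z i - f i z) * D i) / \<sigma>\<^sup>2)) (at (z k))"
  proof (rule DERIV_sum)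
    fix i
    have "(r i has_real_derivative D i) (at (z k))"
      unfolding r_def D_def by (rule C2_has_real_derivative_residual[OF C2])
    then have "((\<lambda>t. c - (r i t)\<^sup>2 / (2 * \<sigma>\<^sup>2)) has_real_derivative
        0 - of_nat 2 * (D i * r i (z k) ^ (2 - Suc 0)) / (2 * \<sigma>\<^sup>2)) (at (z k))"
      by (intro DERIV_diff DERIV_const DERIV_cdivide DERIV_power)
    then show "((\<lambda>t. c - (r i t)\<^sup>2 / (2 * \<sigma>\<^sup>2)) has_real_derivative - ((z i - f i z) * D i) / \<sigma>\<^sup>2) (at (z k))"
      by (rule DERIV_cong) (use \<open>\<sigma> > 0\<close> in \<open>simp add: r_def power2_eq_square field_simps\<close>)
  qed
  ultimately show ?thesis
    by (simp add: pd_def[of k "\<lambda>y. ln (g y)"] DERIV_imp_deriv D_def sum_divide_distrib[symmetric] sum_negf)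
qed

lemma negHessLog_anm_density:
  assumes C2: "\<And>i. C2 (f i)" and "\<sigma> > 0" and "finite I"
    and g: "\<And>z. z \<in> PiE I (\<lambda>_. UNIV) \<Longrightarrow> g z = anm_density \<sigma> f I z"
    and "j \<in> I" "k \<in> I" "x \<in> PiE I (\<lambda>_. UNIV)"
  shows "negHessLog g j k x =
    (\<Sum>i\<in>I. ((if i = j then 1 else 0) - pd j (f i) x) * ((if i = k then 1 else 0) - pd k (f i) x)
             - (x i - f i x) * pd j (pd k (f i)) x) / \<sigma>\<^sup>2"
proof -
  define F where
    "F z = - (\<Sum>i\<in>I. (z i - f i z) * ((if i = k then 1 else 0) - pd k (f i) z)) / \<sigma>\<^sup>2" for z
  have "x(j := t) \<in> PiE I (\<lambda>_. UNIV)" for t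
    using assms(5,7) by (auto simp: PiE_def extensional_def)
  then have "(\<lambda>t. pd k (\<lambda>y. ln (g y)) (x(j := t))) = (\<lambda>t. F (x(j := t)))"
    using pd_ln_anm_density[OF C2 \<open>\<sigma> > 0\<close> \<open>finite I\<close> g \<open>k \<in> I\<close>] by (simp add: F_def)
  moreover have "((\<lambda>t. F (x(j := t))) has_real_derivative
      - (\<Sum>i\<in>I. ((if i = j then 1 else 0) - pd j (f i) x) * ((if i = k then 1 else 0) - pd k (f i) x)
                - (x i - f i x) * pd j (pd k (f i)) x) / \<sigma>\<^sup>2) (at (x j))"
    unfolding F_def
  proof (intro DERIV_cdivide DERIV_minus DERIV_sum)
    fix i
    have "((\<lambda>t. (if i = k then 1 else 0) - pd k (f i) (x(j := t))) has_real_derivative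
        0 - pd j (pd k (f i)) x) (at (x j))"
      by (intro DERIV_diff DERIV_const C2_has_real_derivative_pd_pd[OF C2])
    from DERIV_mult[OF C2_has_real_derivative_residual[OF C2, of x j i i] this]
    show "((\<lambda>t. ((x(j := t)) i - f i (x(j := t))) * ((if i = k then 1 else 0) - pd k (f i) (x(j := t))))
        has_real_derivative ((if i = j then 1 else 0) - pd j (f i) x) * ((if i = k then 1 else 0) - pd k (f i) x)
                - (x i - f i x) * pd j (pd k (f i)) x) (at (x j))"
      by (rule DERIV_cong) (simp add: algebra_simps)
  qed
  ultimately show ?thesis
    by (simp add: negHessLog_def pd_def[of j "pd k (\<lambda>y. ln (g y))"] DERIV_imp_deriv)
qed

section \<open>Additive noise models\<close>

locale additive_noise_model = prob_space M
  for M :: "'a measure"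
    and pa :: "'i::finite \<Rightarrow> 'i set"
    and f :: "'i \<Rightarrow> ('i \<Rightarrow> real) \<Rightarrow> real"
    and \<epsilon> :: "'i \<Rightarrow> 'a \<Rightarrow> real"
    and X :: "'a \<Rightarrow> 'i \<Rightarrow> real"
    and \<sigma> :: real +
  assumes dag: "acyclic {(j, i). j \<in> pa i}"
    and f_pa: "\<And>i x y. (\<forall>j\<in>pa i. x j = y j) \<Longrightarrow> f i x = f i y"
    and f_C2: "\<And>i. C2 (f i)"
    and sigma_pos: "\<sigma> > 0"
    and noise_indep: "indep_vars (\<lambda>_. borel) \<epsilon> UNIV"
    and noise_gauss: "\<And>i. distributed M lborel (\<epsilon> i) (\<lambda>t. ennreal (normal_density 0 \<sigma> t))"
    and anm: "\<And>\<omega> i. \<omega> \<in> space M \<Longrightarrow> X \<omega> i = f i (X \<omega>) + \<epsilon> i \<omega>"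
begin

definition ancestral :: "'i set \<Rightarrow> bool" where
  "ancestral I \<longleftrightarrow> (\<forall>i\<in>I. pa i \<subseteq> I)"

(* X restricted to I is a measurable function of the noise variables indexed by I; this is
   what makes it independent of the remaining noise variables. *)
definition determined_by_noise :: "'i set \<Rightarrow> bool" where
  "determined_by_noise I \<longleftrightarrow> (\<exists>G \<in> measurable (PiM I (\<lambda>_. borel)) (PiM I (\<lambda>_. lborel)).
     \<forall>\<omega>\<in>space M. restrict (X \<omega>) I = G (\<lambda>i\<in>I. \<epsilon> i \<omega>))"

lemma not_parent_self: "i \<notin> pa i"
  using dag by (auto simp: acyclic_def)

lemma exists_sink:
  assumes "I \<noteq> {}"
  shows "\<exists>s\<in>I. \<forall>i\<in>I. s \<notin> pa i"
proof -
  have "wf ({(j, i). j \<in> pa i}\<inverse>)"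
    by (rule finite_acyclic_wf_converse[OF _ dag]) simp
  with assms show ?thesis
    by (metis (no_types, lifting) converse_iff ex_in_conv wfE_min case_prodI mem_Collect_eq)
qed

lemma ancestral_remove_sink:
  assumes "ancestral I" "s \<in> I" "\<And>i. i \<in> I \<Longrightarrow> s \<notin> pa i"
  shows "ancestral (I - {s})" "pa s \<subseteq> I - {s}"
  using assms not_parent_self[of s] by (auto simp: ancestral_def)

lemma f_continuous: "continuous_on UNIV (f i)"
  using f_C2 by (simp add: C2_def)

lemma f_restrict: "pa i \<subseteq> J \<Longrightarrow> f i (restrict x J) = f i x"
  by (rule f_pa) auto

lemma f_measurable_PiM: "pa i \<subseteq> J \<Longrightarrow> f i \<in> borel_measurable (PiM J (\<lambda>_. lborel))"
  by (rule borel_measurable_PiM_if_local[OF f_continuous]) (auto intro: f_pa)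

lemma f_ignores_sink:
  assumes "\<And>i. l \<notin> pa i"
  shows "ignores_coord l (f i)"
  unfolding ignores_coord_def
proof (intro allI)
  show "f i (x(l := t)) = f i x" for x t
    by (rule f_pa) (use assms in auto)
qed

lemma anm_density_insert:
  assumes "ancestral J" "pa s \<subseteq> J" "s \<notin> J"
  shows "anm_density \<sigma> f J (restrict x J) * normal_density 0 \<sigma> (x s - f s (restrict x J))
       = anm_density \<sigma> f (insert s J) x"
proof -
  have "anm_density \<sigma> f J (restrict x J) = anm_density \<sigma> f J x"
    using assms(1) unfolding anm_density_def ancestral_def by (intro prod.cong) (auto simp: f_restrict)
  with assms(2,3) show ?thesis
    by (simp add: f_restrict anm_density_def)
qed

(* indep_var only relates random variables of the same type, so the independence of
   X restricted to J and of eps_s is expressed through their joint law. *)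

lemma distr_restrict_X_noise:
  assumes "determined_by_noise J" "s \<notin> J"
  shows "distr M (PiM J (\<lambda>_. lborel) \<Otimes>\<^sub>M lborel) (\<lambda>\<omega>. (restrict (X \<omega>) J, c * \<epsilon> s \<omega>))
       = distr M (PiM J (\<lambda>_. lborel)) (\<lambda>\<omega>. restrict (X \<omega>) J) \<Otimes>\<^sub>M distr M lborel (\<lambda>\<omega>. c * \<epsilon> s \<omega>)"
proof -
  obtain G where G: "G \<in> measurable (PiM J (\<lambda>_. borel)) (PiM J (\<lambda>_. lborel))"
    and X_G: "\<And>\<omega>. \<omega> \<in> space M \<Longrightarrow> restrict (X \<omega>) J = G (\<lambda>i\<in>J. \<epsilon> i \<omega>)"
    using assms(1) unfolding determined_by_noise_def by blast
  have "indep_var (PiM J (\<lambda>_. borel)) (\<lambda>\<omega>. \<lambda>i\<in>J. \<epsilon> i \<omega>) (PiM {s} (\<lambda>_. borel)) (\<lambda>\<omega>. \<lambda>i\<in>{s}. \<epsilon> i \<omega>)"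
    using \<open>s \<notin> J\<close> by (intro indep_var_restrict[OF noise_indep]) auto
  then have "indep_var (PiM J (\<lambda>_. lborel)) (G \<circ> (\<lambda>\<omega>. \<lambda>i\<in>J. \<epsilon> i \<omega>))
      (PiM {s} (\<lambda>_. borel)) ((\<lambda>z. z) \<circ> (\<lambda>\<omega>. \<lambda>i\<in>{s}. \<epsilon> i \<omega>))"
    using G by (rule indep_var_compose) simp
  then have indep: "indep_var (PiM J (\<lambda>_. lborel)) (\<lambda>\<omega>. restrict (X \<omega>) J)
      (PiM {s} (\<lambda>_. borel)) (\<lambda>\<omega>. \<lambda>i\<in>{s}. \<epsilon> i \<omega>)"
    by (rule indep_var_cong) (auto simp: X_G)
  have "(\<lambda>z. c * z s) \<in> measurable (PiM {s} (\<lambda>_. borel)) (lborel :: real measure)"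
    by (simp add: measurable_cong_sets[OF refl sets_lborel])
  from indep_var_distr_pair[OF indep this] show ?thesis
    by simp
qed

lemma determined_by_noise_insert:
  assumes "determined_by_noise J" "pa s \<subseteq> J" "s \<notin> J"
  shows "determined_by_noise (insert s J)"
proof -
  obtain G where [measurable]: "G \<in> measurable (PiM J (\<lambda>_. borel)) (PiM J (\<lambda>_. lborel))"
    and X_G: "\<And>\<omega>. \<omega> \<in> space M \<Longrightarrow> restrict (X \<omega>) J = G (\<lambda>i\<in>J. \<epsilon> i \<omega>)"
    using assms(1) unfolding determined_by_noise_def by blast
  note [measurable] = f_measurable_PiM[OF \<open>pa s \<subseteq> J\<close>]
  define G' where "G' e = (G (restrict e J))(s := f s (G (restrict e J)) + e s)" for e
  have "G' \<in> measurable (PiM (insert s J) (\<lambda>_. borel)) (PiM (insert s J) (\<lambda>_. lborel))"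
    unfolding G'_def by measurable
  moreover have "restrict (X \<omega>) (insert s J) = G' (\<lambda>i\<in>insert s J. \<epsilon> i \<omega>)" if "\<omega> \<in> space M" for \<omega>
  proof -
    have "restrict (\<lambda>i\<in>insert s J. \<epsilon> i \<omega>) J = (\<lambda>i\<in>J. \<epsilon> i \<omega>)"
      by (auto simp: fun_eq_iff)
    then show ?thesis
      using anm[OF that, of s] \<open>pa s \<subseteq> J\<close> \<open>s \<notin> J\<close>
      by (simp add: G'_def X_G[OF that, symmetric] f_restrict) (auto simp: fun_eq_iff)
  qed
  ultimately show ?thesis
    unfolding determined_by_noise_def by blast
qed

lemma distributed_restrict_X_insert:
  assumes "ancestral J" "determined_by_noise J" "pa s \<subseteq> J" "s \<notin> J"
    and X_J: "distributed M (PiM J (\<lambda>_. lborel)) (\<lambda>\<omega>. restrict (X \<omega>) J) (\<lambda>x. ennreal (anm_density \<sigma> f J x))"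
  shows "distributed M (PiM (insert s J) (\<lambda>_. lborel)) (\<lambda>\<omega>. restrict (X \<omega>) (insert s J))
           (\<lambda>x. ennreal (anm_density \<sigma> f (insert s J) x))"
proof -
  have "distributed M (PiM J (\<lambda>_. lborel) \<Otimes>\<^sub>M lborel) (\<lambda>\<omega>. (restrict (X \<omega>) J, \<epsilon> s \<omega>))
      (\<lambda>(y, e). ennreal (anm_density \<sigma> f J y) * ennreal (normal_density 0 \<sigma> e))"
    using distr_restrict_X_noise[OF assms(2,4), of 1]
    by (intro distributed_joint_indep' X_J noise_gauss lborel.sigma_finite_measure_axioms
        lborel_PiM.sigma_finite) simp_all
  from distributed_fun_upd_shear[OF finite \<open>s \<notin> J\<close> f_measurable_PiM[OF \<open>pa s \<subseteq> J\<close>] this]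
  have "distributed M (PiM (insert s J) (\<lambda>_. lborel))
      (\<lambda>\<omega>. (restrict (X \<omega>) J)(s := f s (restrict (X \<omega>) J) + \<epsilon> s \<omega>))
      (\<lambda>x. ennreal (anm_density \<sigma> f J (restrict x J)) * ennreal (normal_density 0 \<sigma> (x s - f s (restrict x J))))"
    by simp
  moreover have "(restrict (X \<omega>) J)(s := f s (restrict (X \<omega>) J) + \<epsilon> s \<omega>) = restrict (X \<omega>) (insert s J)"
    if "\<omega> \<in> space M" for \<omega>
    using anm[OF that, of s] \<open>pa s \<subseteq> J\<close> by (auto simp: f_restrict fun_eq_iff)
  moreover have "ennreal (anm_density \<sigma> f J (restrict x J)) * ennreal (normal_density 0 \<sigma> (x s - f s (restrict x J)))
      = ennreal (anm_density \<sigma> f (insert s J) x)" for x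
    using anm_density_insert[OF assms(1,3,4), of x] sigma_pos
    by (simp add: ennreal_mult[symmetric] anm_density_pos normal_density_nonneg less_imp_le)
  ultimately show ?thesis
    by (rule distributed_cong_on_space)
qed

lemma restrict_X_ancestral:
  assumes "ancestral I"
  shows "determined_by_noise I \<and>
    distributed M (PiM I (\<lambda>_. lborel)) (\<lambda>\<omega>. restrict (X \<omega>) I) (\<lambda>x. ennreal (anm_density \<sigma> f I x))"
  using finite[of I] assms
proof (induction rule: finite_remove_induct)
  case empty
  have "distr M (PiM {} (\<lambda>_. lborel)) (\<lambda>_. \<lambda>_. undefined) = PiM {} (\<lambda>_. lborel :: real measure)"
    by (rule measure_eqI) (auto simp: sets_PiM_empty emeasure_distr emeasure_space_1 space_PiM_empty)
  then show ?case
    by (auto simp: determined_by_noise_def distributed_def density_1 intro!: bexI[of _ "\<lambda>x. x"])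
next
  case (remove I)
  obtain s where "s \<in> I" and s_sink: "\<And>i. i \<in> I \<Longrightarrow> s \<notin> pa i"
    using exists_sink[OF \<open>I \<noteq> {}\<close>] by blast
  note ancestral_remove_sink[OF remove.prems \<open>s \<in> I\<close> s_sink]
  moreover have "I = insert s (I - {s})"
    using \<open>s \<in> I\<close> by blast
  ultimately show ?case
    using remove.IH[OF \<open>s \<in> I\<close>]
    by (metis Diff_iff insertI1 determined_by_noise_insert distributed_restrict_X_insert)
qed

lemma density_eq_anm_density:
  assumes "ancestral I"
    and d: "distributed M (PiM I (\<lambda>_. lborel)) (\<lambda>\<omega>. restrict (X \<omega>) I) (\<lambda>x. ennreal (d x))"
    and "continuous_on (PiE I (\<lambda>_. UNIV)) d" "x \<in> PiE I (\<lambda>_. UNIV)"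
  shows "d x = anm_density \<sigma> f I x"
proof -
  have "AE x in PiM I (\<lambda>_. lborel). ennreal (d x) = ennreal (anm_density \<sigma> f I x)"
    using restrict_X_ancestral[OF assms(1)] by (intro distributed_unique[OF d]) blast
  moreover have "d x = anm_density \<sigma> f I x" if "ennreal (d x) = ennreal (anm_density \<sigma> f I x)" for x
    using that anm_density_pos[OF sigma_pos, of f I x] by (metis ennreal_eq_0_iff ennreal_inj less_le not_le)
  ultimately have "AE x in PiM I (\<lambda>_. lborel). d x = anm_density \<sigma> f I x"
    by (auto elim: eventually_mono)
  moreover have "continuous_on (PiE I (\<lambda>_. UNIV)) (anm_density \<sigma> f I)"
    by (intro continuous_on_anm_density f_continuous sigma_pos)
  ultimately show ?thesis
    using assms(3,4) by (intro continuous_on_AE_PiM_lborel_eq)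
qed

lemma schur_negHessLog_sink:
  assumes sink: "\<And>i. l \<notin> pa i"
    and p: "\<And>x. p x = anm_density \<sigma> f UNIV x"
    and q: "\<And>y. y \<in> PiE (UNIV - {l}) (\<lambda>_. UNIV) \<Longrightarrow> q y = anm_density \<sigma> f (UNIV - {l}) y"
    and "j \<noteq> l" "k \<noteq> l"
  shows "schur (\<lambda>a b. negHessLog p a b x) l j k
       = negHessLog q j k (restrict x (UNIV - {l})) - (x l - f l x) * pd j (pd k (f l)) x / \<sigma>\<^sup>2"
proof -
  define h where "h i a b y = ((if i = a then 1 else 0) - pd a (f i) y) * ((if i = b then 1 else 0) - pd b (f i) y)
      - (y i - f i y) * pd a (pd b (f i)) y" for i a b y
  have pd_l: "pd l (f i) = (\<lambda>_. 0)" for i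
    by (intro ext ignores_coord_pd_eq_0 f_ignores_sink sink)
  have ign: "ignores_coord l (f i)" "ignores_coord l (pd a (f i))" "ignores_coord l (pd a (pd b (f i)))" for i a b
    using f_ignores_sink[OF sink] by (auto intro!: ignores_coord_pd)
  have Hp: "negHessLog p a b x = (\<Sum>i\<in>UNIV. h i a b x) / \<sigma>\<^sup>2" for a b
    unfolding h_def by (rule negHessLog_anm_density[OF f_C2 sigma_pos]) (auto simp: p)
  have "negHessLog q j k (restrict x (UNIV - {l})) = (\<Sum>i\<in>UNIV - {l}. h i j k (restrict x (UNIV - {l}))) / \<sigma>\<^sup>2"
    unfolding h_def using \<open>j \<noteq> l\<close> \<open>k \<noteq> l\<close>
    by (intro negHessLog_anm_density[OF f_C2 sigma_pos finite q]) auto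
  also have "\<dots> = (\<Sum>i\<in>UNIV - {l}. h i j k x) / \<sigma>\<^sup>2"
    by (simp add: h_def ignores_coord_restrict ign)
  finally have Hq: "negHessLog q j k (restrict x (UNIV - {l})) = (\<Sum>i\<in>UNIV - {l}. h i j k x) / \<sigma>\<^sup>2" .
  \<comment> \<open>l is a parent of no node, so row and column l of the Hessian only involve the summand i = l\<close>
  have "h i a l x = (if i = l then (if l = a then 1 else 0) - pd a (f l) x else 0)"
    "h i l a x = (if i = l then (if l = a then 1 else 0) - pd a (f l) x else 0)" for i a
    by (auto simp: h_def pd_l ignores_coord_pd_eq_0[OF ign(2)])
  then have "negHessLog p l l x = 1 / \<sigma>\<^sup>2" "negHessLog p j l x = - pd j (f l) x / \<sigma>\<^sup>2"
    "negHessLog p l k x = - pd k (f l) x / \<sigma>\<^sup>2"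
    using \<open>j \<noteq> l\<close> \<open>k \<noteq> l\<close> by (simp_all add: Hp pd_l)
  moreover have "negHessLog p j k x = (h l j k x + (\<Sum>i\<in>UNIV - {l}. h i j k x)) / \<sigma>\<^sup>2"
    by (simp add: Hp sum.remove[of UNIV l])
  ultimately show ?thesis
    unfolding schur_def Hq using \<open>j \<noteq> l\<close> \<open>k \<noteq> l\<close> sigma_pos
    by (simp only:) (simp add: h_def field_simps)
qed

lemma integral_noise_sink_eq_0:
  assumes "\<And>i. l \<notin> pa i" "g \<in> borel_measurable (PiM (UNIV - {l}) (\<lambda>_. lborel))"
  shows "(\<integral>\<omega>. \<epsilon> l \<omega> * g (restrict (X \<omega>) (UNIV - {l})) \<partial>M) = 0"
proof -
  have "ancestral (UNIV - {l})"
    using assms(1) by (auto simp: ancestral_def)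
  note X_J = restrict_X_ancestral[OF this]
  note indep = distr_restrict_X_noise[OF conjunct1[OF X_J], of l]
  have "distributed M lborel (\<lambda>\<omega>. 0 + (-1) * \<epsilon> l \<omega>) (\<lambda>t. ennreal (normal_density (0 + (-1) * 0) (\<bar>-1\<bar> * \<sigma>) t))"
    by (rule normal_density_affine[OF noise_gauss sigma_pos]) simp
  then have "distr M lborel (\<lambda>\<omega>. (-1) * \<epsilon> l \<omega>) = distr M lborel (\<lambda>\<omega>. 1 * \<epsilon> l \<omega>)"
    using noise_gauss[of l] by (simp add: distributed_def)
  then have "distr M (PiM (UNIV - {l}) (\<lambda>_. lborel) \<Otimes>\<^sub>M lborel) (\<lambda>\<omega>. (restrict (X \<omega>) (UNIV - {l}), - \<epsilon> l \<omega>))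
      = distr M (PiM (UNIV - {l}) (\<lambda>_. lborel) \<Otimes>\<^sub>M lborel) (\<lambda>\<omega>. (restrict (X \<omega>) (UNIV - {l}), \<epsilon> l \<omega>))"
    using indep[of "-1"] indep[of 1] by simp
  moreover note distributed_measurable[OF conjunct2[OF X_J]]
  moreover have "\<epsilon> l \<in> borel_measurable M"
    using noise_gauss[of l] by (auto simp: distributed_def measurable_cong_sets[OF refl sets_lborel])
  ultimately show ?thesis
    using assms(2) by (rule integral_times_eq_0_if_symmetric)
qed

lemma integral_schur_negHessLog_sink:
  assumes sink: "\<And>i. l \<notin> pa i"
    and p: "\<And>x. p x = anm_density \<sigma> f UNIV x"
    and q: "\<And>y. y \<in> PiE (UNIV - {l}) (\<lambda>_. UNIV) \<Longrightarrow> q y = anm_density \<sigma> f (UNIV - {l}) y"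
    and "j \<noteq> l" "k \<noteq> l"
    and int_schur: "integrable M (\<lambda>\<omega>. schur (\<lambda>a b. negHessLog p a b (X \<omega>)) l j k)"
    and int_marg: "integrable M (\<lambda>\<omega>. negHessLog q j k (restrict (X \<omega>) (UNIV - {l})))"
  shows "(\<integral>\<omega>. schur (\<lambda>a b. negHessLog p a b (X \<omega>)) l j k \<partial>M)
       = (\<integral>\<omega>. negHessLog q j k (restrict (X \<omega>) (UNIV - {l})) \<partial>M)"
proof -
  define g where "g y = pd j (pd k (f l)) y / \<sigma>\<^sup>2" for y
  have ign: "ignores_coord l (pd j (pd k (f l)))"
    by (intro ignores_coord_pd f_ignores_sink sink)
  then have "ignores_coord l g"
    by (simp add: g_def ignores_coord_def)
  have schur: "schur (\<lambda>a b. negHessLog p a b (X \<omega>)) l j k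
      = negHessLog q j k (restrict (X \<omega>) (UNIV - {l})) - \<epsilon> l \<omega> * g (restrict (X \<omega>) (UNIV - {l}))"
    if "\<omega> \<in> space M" for \<omega>
    using schur_negHessLog_sink[OF sink p q \<open>j \<noteq> l\<close> \<open>k \<noteq> l\<close>] anm[OF that, of l]
    by (simp add: ignores_coord_restrict[OF ign] g_def)
  have "continuous_on UNIV g"
    unfolding g_def using f_C2[of l] sigma_pos
    by (intro continuous_on_divide continuous_on_const) (auto simp: C2_def)
  with \<open>ignores_coord l g\<close> have noise_term: "(\<integral>\<omega>. \<epsilon> l \<omega> * g (restrict (X \<omega>) (UNIV - {l})) \<partial>M) = 0"
    by (intro integral_noise_sink_eq_0 sink borel_measurable_PiM_ignores_coord)
  have "integrable M (\<lambda>\<omega>. \<epsilon> l \<omega> * g (restrict (X \<omega>) (UNIV - {l})))"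
    using Bochner_Integration.integrable_diff[OF int_marg int_schur]
    by (rule Bochner_Integration.integrable_cong[OF refl, THEN iffD1, rotated]) (simp add: schur)
  then show ?thesis
    using int_marg noise_term
    by (simp add: schur cong: Bochner_Integration.integral_cong)
qed

end

theorem lemma3p3:
  fixes M :: "'a measure"
    and pa :: "'i::finite \<Rightarrow> 'i set"
    and f :: "'i \<Rightarrow> ('i \<Rightarrow> real) \<Rightarrow> real"
    and \<epsilon> :: "'i \<Rightarrow> 'a \<Rightarrow> real"
    and X :: "'a \<Rightarrow> ('i \<Rightarrow> real)"
    and \<sigma> :: real
    and p :: "('i \<Rightarrow> real) \<Rightarrow> real"
    and q :: "('i \<Rightarrow> real) \<Rightarrow> real"
    and l :: 'i
  assumes M: "prob_space M"
    and dag: "acyclic {(j, i). j \<in> pa i}"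
    and f_pa: "\<And>i x y. (\<forall>j\<in>pa i. x j = y j) \<Longrightarrow> f i x = f i y"
    and f_C2: "\<And>i. C2 (f i)"
    and sigma_pos: "\<sigma> > 0"
    and noise_indep: "prob_space.indep_vars M (\<lambda>_. borel) \<epsilon> UNIV"
    and noise_gauss: "\<And>i. distributed M lborel (\<epsilon> i) (\<lambda>t. ennreal (normal_density 0 \<sigma> t))"
    and anm: "\<And>\<omega> i. \<omega> \<in> space M \<Longrightarrow> X \<omega> i = f i (X \<omega>) + \<epsilon> i \<omega>"
    and p_density: "distributed M (PiM UNIV (\<lambda>_. lborel)) X (\<lambda>x. ennreal (p x))"
    and p_cont: "continuous_on UNIV p"
    and sink: "\<And>i. l \<notin> pa i"
    and q_density: "distributed M (PiM (UNIV - {l}) (\<lambda>_. lborel))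
                      (\<lambda>\<omega>. restrict (X \<omega>) (UNIV - {l})) (\<lambda>y. ennreal (q y))"
    and q_cont: "continuous_on (PiE (UNIV - {l}) (\<lambda>_. UNIV)) q"
    and int_schur: "\<And>j k. j \<noteq> l \<Longrightarrow> k \<noteq> l \<Longrightarrow>
                      integrable M (\<lambda>\<omega>. schur (\<lambda>a b. negHessLog p a b (X \<omega>)) l j k)"
    and int_marg: "\<And>j k. j \<noteq> l \<Longrightarrow> k \<noteq> l \<Longrightarrow>
                      integrable M (\<lambda>\<omega>. negHessLog q j k (restrict (X \<omega>) (UNIV - {l})))"
  shows "\<forall>j k. j \<noteq> l \<longrightarrow> k \<noteq> l \<longrightarrow>
           (\<integral>\<omega>. schur (\<lambda>a b. negHessLog p a b (X \<omega>)) l j k \<partial>M)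
         = (\<integral>\<omega>. negHessLog q j k (restrict (X \<omega>) (UNIV - {l})) \<partial>M)"
proof (intro allI impI)
  fix j k assume "j \<noteq> l" "k \<noteq> l"
  interpret additive_noise_model M pa f \<epsilon> X \<sigma>
    using M dag f_pa f_C2 sigma_pos noise_indep noise_gauss anm
    by (intro additive_noise_model.intro additive_noise_model_axioms.intro)
  have "ancestral UNIV" "ancestral (UNIV - {l})"
    using sink by (auto simp: ancestral_def)
  have p: "p x = anm_density \<sigma> f UNIV x" for x
    using p_density p_cont \<open>ancestral UNIV\<close> by (intro density_eq_anm_density) (auto simp: restrict_UNIV)
  have q: "q y = anm_density \<sigma> f (UNIV - {l}) y" if "y \<in> PiE (UNIV - {l}) (\<lambda>_. UNIV)" for y
    using q_density q_cont that \<open>ancestral (UNIV - {l})\<close> by (intro density_eq_anm_density)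
  show "(\<integral>\<omega>. schur (\<lambda>a b. negHessLog p a b (X \<omega>)) l j k \<partial>M)
      = (\<integral>\<omega>. negHessLog q j k (restrict (X \<omega>) (UNIV - {l})) \<partial>M)"
    using \<open>j \<noteq> l\<close> \<open>k \<noteq> l\<close> int_schur int_marg
    by (intro integral_schur_negHessLog_sink[OF sink p q])
qed

end
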